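(* Let $\mathcal{C}_i\in\mathbb{R}^{n_{1i}\times n_{2i}\times d_i}$ and let $\Phi_{\theta_i}:\mathbb{R}\to\mathbb{R}^{d_i}$ be an $L$-layer multilayer perceptron with weight matrices $\mathbf{W}_1,\dots,\mathbf{W}_L$ and activation function $\sigma:\mathbb{R}\to\mathbb{R}$ (applied entrywise) that is Lipschitz continuous with Lipschitz constant $L_\sigma$. Define $\widetilde{\mathbf{G}}_i(p)=\mathcal{C}_i\times_3\Phi_{\theta_i}(p)$. Assume $\|\mathcal{C}_i\|_1\le\kappa$ and $\|\mathbf{W}_\ell\|_1\le\eta$ for every $\ell=1,\dots,L$. Then for all $p_1,p_2\in\mathbb{R}$, $$\|\widetilde{\mathbf{G}}_i(p_1)-\widetilde{\mathbf{G}}_i(p_2)\|_F\le\kappa\,(L_\sigma\eta)^L\,|p_1-p_2|.$$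
   Context: The $L$-layer MLP is $\mathbf{h}^{(0)}=p\in\mathbb{R}$, $\mathbf{h}^{(\ell)}=\sigma(\mathbf{W}_\ell\mathbf{h}^{(\ell-1)}+\mathbf{b}_\ell)$ for $\ell=1,\dots,L$ (with bias vectors $\mathbf{b}_\ell$, possibly zero), and $\Phi_{\theta_i}(p)=\mathbf{h}^{(L)}\in\mathbb{R}^{d_i}$; the weight matrices have compatible sizes with $\mathbf{W}_1$ having one column and $\mathbf{W}_L$ having $d_i$ rows. For a matrix or tensor, $\|\cdot\|_1$ denotes the entrywise $\ell_1$ norm (sum of absolute values of all entries), and $\|\cdot\|_F$ the Frobenius norm. For $\mathcal{C}\in\mathbb{R}^{n_1\times n_2\times d}$ and $\mathbf{x}\in\mathbb{R}^d$, $\mathcal{C}\times_3\mathbf{x}:=\sum_{\ell=1}^d x_\ell\,\mathcal{C}(:,:,\ell)\in\mathbb{R}^{n_1\times n_2}$. *)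

theory Defs
  imports "HOL-Analysis.Analysis"
begin

text \<open>Vectors, matrices and 3-tensors with varying sizes are represented as
functions on natural-number indices, with the sizes kept as explicit bounds.
Layer widths: m 0 = 1 (scalar input), m L = d (output dimension).
Weight matrix W l has size (m l) x (m (l-1)); bias b l has length m l.\<close>

fun mlp_h :: "(real \<Rightarrow> real) \<Rightarrow> (nat \<Rightarrow> nat \<Rightarrow> nat \<Rightarrow> real) \<Rightarrow> (nat \<Rightarrow> nat \<Rightarrow> real)
    \<Rightarrow> (nat \<Rightarrow> nat) \<Rightarrow> real \<Rightarrow> nat \<Rightarrow> nat \<Rightarrow> real" where
  "mlp_h \<sigma> W b m p 0 = (\<lambda>_. p)"
| "mlp_h \<sigma> W b m p (Suc l) =
     (\<lambda>j. \<sigma> ((\<Sum>k<m l. W (Suc l) j k * mlp_h \<sigma> W b m p l k) + b (Suc l) j))"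

definition mat_l1 :: "nat \<Rightarrow> nat \<Rightarrow> (nat \<Rightarrow> nat \<Rightarrow> real) \<Rightarrow> real" where
  "mat_l1 r c A = (\<Sum>j<r. \<Sum>k<c. \<bar>A j k\<bar>)"

definition tensor_l1 :: "nat \<Rightarrow> nat \<Rightarrow> nat \<Rightarrow> (nat \<Rightarrow> nat \<Rightarrow> nat \<Rightarrow> real) \<Rightarrow> real" where
  "tensor_l1 n1 n2 d C = (\<Sum>a<n1. \<Sum>c<n2. \<Sum>l<d. \<bar>C a c l\<bar>)"

definition mode3 :: "nat \<Rightarrow> (nat \<Rightarrow> nat \<Rightarrow> nat \<Rightarrow> real) \<Rightarrow> (nat \<Rightarrow> real) \<Rightarrow> nat \<Rightarrow> nat \<Rightarrow> real" where
  "mode3 d C x = (\<lambda>a c. \<Sum>l<d. x l * C a c l)"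

definition frob :: "nat \<Rightarrow> nat \<Rightarrow> (nat \<Rightarrow> nat \<Rightarrow> real) \<Rightarrow> real" where
  "frob n1 n2 A = sqrt (\<Sum>a<n1. \<Sum>c<n2. (A a c)\<^sup>2)"

end

theory Submission
  imports Defs
begin

text \<open>Every layer is Lipschitz for the sup norm with constant \<open>L\<sigma> * \<eta>\<close>, because each row
  of \<open>W\<^sub>\<ell>\<close> has \<open>\<ell>\<^sub>1\<close> norm at most \<open>\<parallel>W\<^sub>\<ell>\<parallel>\<^sub>1 \<le> \<eta>\<close>; so the outputs at \<open>p\<^sub>1\<close> and \<open>p\<^sub>2\<close>
  differ entrywise by at most \<open>D = (L\<sigma> * \<eta>)\<^sup>L * \<bar>p\<^sub>1 - p\<^sub>2\<bar>\<close>. Contracting with \<open>\<C>\<close> turns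
  this into the entrywise \<open>\<ell>\<^sub>1\<close> bound \<open>\<parallel>\<C>\<parallel>\<^sub>1 * D\<close>, which dominates the Frobenius norm.\<close>

lemma mat_l1_nonneg: "0 \<le> mat_l1 r c A"
  unfolding mat_l1_def by (intro sum_nonneg) auto

lemma row_l1_le_mat_l1:
  assumes "j < r"
  shows "(\<Sum>k<c. \<bar>A j k\<bar>) \<le> mat_l1 r c A"
  unfolding mat_l1_def
  using assms by (intro member_le_sum sum_nonneg) auto

lemma frob_le_mat_l1: "frob n1 n2 A \<le> mat_l1 n1 n2 A"
proof -
  have "frob n1 n2 A = L2_set (\<lambda>(a, c). A a c) ({..<n1} \<times> {..<n2})"
    unfolding frob_def L2_set_def by (simp add: sum.cartesian_product case_prod_beta)
  also have "\<dots> \<le> (\<Sum>ac \<in> {..<n1} \<times> {..<n2}. \<bar>(\<lambda>(a, c). A a c) ac\<bar>)"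
    by (rule L2_set_le_sum_abs)
  also have "\<dots> = mat_l1 n1 n2 A"
    unfolding mat_l1_def by (simp add: sum.cartesian_product case_prod_beta)
  finally show ?thesis .
qed

lemma abs_sum_mult_diff_le:
  fixes w x y :: "'a \<Rightarrow> real"
  assumes "\<And>k. k \<in> A \<Longrightarrow> \<bar>x k - y k\<bar> \<le> D"
  shows "\<bar>(\<Sum>k\<in>A. w k * x k) - (\<Sum>k\<in>A. w k * y k)\<bar> \<le> (\<Sum>k\<in>A. \<bar>w k\<bar>) * D"
proof -
  have "\<bar>(\<Sum>k\<in>A. w k * x k) - (\<Sum>k\<in>A. w k * y k)\<bar> = \<bar>\<Sum>k\<in>A. w k * (x k - y k)\<bar>"
    by (simp add: sum_subtractf right_diff_distrib)
  also have "\<dots> \<le> (\<Sum>k\<in>A. \<bar>w k\<bar> * \<bar>x k - y k\<bar>)"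
    by (rule order_trans[OF sum_abs]) (simp add: abs_mult)
  also have "\<dots> \<le> (\<Sum>k\<in>A. \<bar>w k\<bar> * D)"
    using assms by (intro sum_mono mult_left_mono) auto
  finally show ?thesis
    by (simp add: sum_distrib_right)
qed

lemma mlp_h_diff_le:
  assumes lip: "L\<sigma>-lipschitz_on UNIV \<sigma>"
    and W: "\<And>l. l \<in> {1..L} \<Longrightarrow> mat_l1 (m l) (m (l - 1)) (W l) \<le> \<eta>"
    and "j < m L"
  shows "\<bar>mlp_h \<sigma> W b m p1 L j - mlp_h \<sigma> W b m p2 L j\<bar> \<le> (L\<sigma> * \<eta>) ^ L * \<bar>p1 - p2\<bar>"
  using W \<open>j < m L\<close>
proof (induction L arbitrary: j)
  case 0
  then show ?case by simp
next
  case (Suc l)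
  let ?h = "\<lambda>p. mlp_h \<sigma> W b m p l"
  let ?D = "(L\<sigma> * \<eta>) ^ l * \<bar>p1 - p2\<bar>"
  have W_Suc: "mat_l1 (m (Suc l)) (m l) (W (Suc l)) \<le> \<eta>"
    using Suc.prems(1) by force
  have "0 \<le> L\<sigma>"
    using lip by (rule lipschitz_on_nonneg)
  moreover have "0 \<le> \<eta>"
    using W_Suc mat_l1_nonneg order_trans by blast
  ultimately have "0 \<le> ?D" by simp
  have IH: "\<bar>?h p1 k - ?h p2 k\<bar> \<le> ?D" if "k < m l" for k
    using Suc.IH Suc.prems(1) that by simp
  have \<sigma>_shift: "\<bar>\<sigma> (u + c) - \<sigma> (v + c)\<bar> \<le> L\<sigma> * \<bar>u - v\<bar>" for u v c
    using lipschitz_onD[OF lip, of "u + c" "v + c"] by (simp add: dist_real_def)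
  have "\<bar>mlp_h \<sigma> W b m p1 (Suc l) j - mlp_h \<sigma> W b m p2 (Suc l) j\<bar>
      \<le> L\<sigma> * \<bar>(\<Sum>k<m l. W (Suc l) j k * ?h p1 k) - (\<Sum>k<m l. W (Suc l) j k * ?h p2 k)\<bar>"
    by (simp only: mlp_h.simps \<sigma>_shift)
  also have "\<dots> \<le> L\<sigma> * ((\<Sum>k<m l. \<bar>W (Suc l) j k\<bar>) * ?D)"
    using IH \<open>0 \<le> L\<sigma>\<close> by (intro mult_left_mono abs_sum_mult_diff_le) auto
  also have "\<dots> \<le> L\<sigma> * (\<eta> * ?D)"
    using order_trans[OF row_l1_le_mat_l1[OF Suc.prems(2)] W_Suc] \<open>0 \<le> L\<sigma>\<close> \<open>0 \<le> ?D\<close>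
    by (intro mult_left_mono mult_right_mono) auto
  also have "\<dots> = (L\<sigma> * \<eta>) ^ Suc l * \<bar>p1 - p2\<bar>"
    by (simp add: algebra_simps)
  finally show ?case .
qed

lemma frob_mode3_diff_le:
  assumes "\<And>l. l < d \<Longrightarrow> \<bar>x l - y l\<bar> \<le> D"
  shows "frob n1 n2 (\<lambda>a c. mode3 d C x a c - mode3 d C y a c) \<le> tensor_l1 n1 n2 d C * D"
proof -
  have entry: "\<bar>mode3 d C x a c - mode3 d C y a c\<bar> \<le> (\<Sum>l<d. \<bar>C a c l\<bar>) * D" for a c
    using abs_sum_mult_diff_le[of "{..<d}" x y D "C a c"] assms
    unfolding mode3_def by (simp add: mult.commute)
  have "frob n1 n2 (\<lambda>a c. mode3 d C x a c - mode3 d C y a c)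
      \<le> mat_l1 n1 n2 (\<lambda>a c. mode3 d C x a c - mode3 d C y a c)"
    by (rule frob_le_mat_l1)
  also have "\<dots> \<le> (\<Sum>a<n1. \<Sum>c<n2. (\<Sum>l<d. \<bar>C a c l\<bar>) * D)"
    unfolding mat_l1_def using entry by (intro sum_mono) auto
  also have "\<dots> = tensor_l1 n1 n2 d C * D"
    unfolding tensor_l1_def by (simp add: sum_distrib_right)
  finally show ?thesis .
qed

theorem theorem2:
  fixes C :: "nat \<Rightarrow> nat \<Rightarrow> nat \<Rightarrow> real" and n1 n2 d L :: nat
    and m :: "nat \<Rightarrow> nat" and W :: "nat \<Rightarrow> nat \<Rightarrow> nat \<Rightarrow> real" and b :: "nat \<Rightarrow> nat \<Rightarrow> real"
    and \<sigma> :: "real \<Rightarrow> real" and L\<sigma> \<kappa> \<eta> p1 p2 :: real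
  assumes "1 \<le> L"
    and "m 0 = 1" and "m L = d"
    and "L\<sigma>-lipschitz_on UNIV \<sigma>"
    and "tensor_l1 n1 n2 d C \<le> \<kappa>"
    and "\<forall>l\<in>{1..L}. mat_l1 (m l) (m (l - 1)) (W l) \<le> \<eta>"
  shows "frob n1 n2 (\<lambda>a c. mode3 d C (mlp_h \<sigma> W b m p1 L) a c - mode3 d C (mlp_h \<sigma> W b m p2 L) a c)
           \<le> \<kappa> * (L\<sigma> * \<eta>) ^ L * \<bar>p1 - p2\<bar>"
proof -
  let ?D = "(L\<sigma> * \<eta>) ^ L * \<bar>p1 - p2\<bar>"
  have "mat_l1 (m 1) (m (1 - 1)) (W 1) \<le> \<eta>"
    using bspec[OF assms(6), of 1] assms(1) by simp
  then have "0 \<le> \<eta>"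
    using mat_l1_nonneg order_trans by blast
  then have "0 \<le> ?D"
    using lipschitz_on_nonneg[OF assms(4)] by simp
  have "frob n1 n2 (\<lambda>a c. mode3 d C (mlp_h \<sigma> W b m p1 L) a c - mode3 d C (mlp_h \<sigma> W b m p2 L) a c)
      \<le> tensor_l1 n1 n2 d C * ?D"
    using mlp_h_diff_le[OF assms(4)] assms(3,6) by (intro frob_mode3_diff_le) auto
  also have "\<dots> \<le> \<kappa> * ?D"
    using assms(5) \<open>0 \<le> ?D\<close> by (rule mult_right_mono)
  finally show ?thesis
    by (simp add: mult.assoc)
qed

end
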